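(* Let $N=2^k$ for a positive integer $k$, let positive integers $N_s$ with $\sum_s N_s=N$ be given, and let $k_s=\lceil\lg N_s\rceil$. Consider any sAEDS with $|\mathcal X_s|=N_s$ such that, for each $s$, exactly $2^{k_s}-N_s$ states $x\in\mathcal X_s$ have $|\mathcal F^+_x|=2^{k-k_s+1}$ and the remaining $2N_s-2^{k_s}$ states have $|\mathcal F^+_x|=2^{k-k_s}$, each $\mathcal F^+_x$ being encoded by a fixed-length code of length $\lg|\mathcal F^+_x|$. Assume its state chain is irreducible, with stationary distribution $Q$. Then $$L\le H(p)+D(p\|q)+\sum_{s}p(s)\big(\nu_{N_s,\tilde Q_s}-\mu_{\mathrm{pi}}(N_s)\big)\le H(p)+D(p\|q)+\sum_s p(s)\nu_{N_s,\tilde Q_s},$$ where $0\le\mu_{\mathrm{pi}}(N_s)=k_s+1-2^{k_s}/N_s-\lg N_s\le\sigma$ with $\sigma=\lg\lg e+1-\lg e$, and $$0\le \nu_{N_s,\tilde Q_s}=\frac{2N_s-2^{k_s}}{N_s}-\sum_{x\in\check{\mathcal X}_s}\tilde Q_s(x)<\frac{2N_s-2^{k_s}}{N_s}\le1,$$ $\check{\mathcal X}_s$ being a set of $2N_s-2^{k_s}$ elements of $\mathcal X_s$ with the smallest values of $\tilde Q_s(x)$.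
   Context: Let $\mathcal S$ be a finite alphabet with $|\mathcal S|\ge 2$ and $p=\{p(s)\}$ a probability distribution with $p(s)>0$ for all $s$ (i.i.d. source). $\mathcal B=\{0,1\}^*$ (including the empty word), $l(\beta)$ the word length, $\lg=\log_2$. An AEDS with finite state set $\mathcal X$, $|\mathcal X|=N$, consists of maps $E_{\hat x}:\mathcal S\to\mathcal B$ and $F^-_{\hat x}:\mathcal S\to\mathcal X$ ($\hat x\in\mathcal X$) such that for every $x\in\mathcal X$ the words $E_{\hat x}(s)$ over all pairs $(\hat x,s)$ with $F^-_{\hat x}(s)=x$ are pairwise distinct and form a prefix-free set. The state chain is the Markov chain on $\mathcal X$ moving from $\hat x$ to $F^-_{\hat x}(s)$ with probability $p(s)$; for a stationary distribution $Q$ the average code length is $L=\sum_{\hat x}\sum_s p(s)Q(\hat x)l(E_{\hat x}(s))$. A state-divided AEDS (sAEDS) is an AEDS for which the sets $\mathcal X_s=\{F^-_{\hat x}(s):\hat x\in\mathcal X\}$ are pairwise disjoint with union $\mathcal X$; $N_s=|\mathcal X_s|$, $q(s)=N_s/N$. For $x\in\mathcal X_s$, $\mathcal F^+_x=\{\hat x: F^-_{\hat x}(s)=x\}$; for each $s$ these sets partition $\mathcal X$, and $\hat x\mapsto E_{\hat x}(s)$ is an injective prefix-free code on $\mathcal F^+_x$. For $x\in\mathcal X_s$, $\tilde Q_s(x)=\sum_{\hat x\in\mathcal F^+_x}Q(\hat x)$ (so $\tilde Q_s$ is a probability distribution on $\mathcal X_s$). $H(p)=-\sum_s p(s)\lg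 p(s)$, $D(p\|q)=\sum_s p(s)\lg(p(s)/q(s))$. *)

theory Defs
  imports Complex_Main "HOL-Library.Sublist" "HOL-Library.Cardinality"
begin

text \<open>Note that prefix includes
  equality, so this one condition captures both distinctness and prefix-freeness.\<close>
definition aeds :: "('x \<Rightarrow> 's \<Rightarrow> bool list) \<Rightarrow> ('x \<Rightarrow> 's \<Rightarrow> 'x) \<Rightarrow> bool" where
  "aeds E F \<longleftrightarrow>
     (\<forall>x a s b t. F a s = x \<and> F b t = x \<and> (a, s) \<noteq> (b, t) \<longrightarrow> \<not> prefix (E a s) (E b t))"

definition Xs :: "('x \<Rightarrow> 's \<Rightarrow> 'x) \<Rightarrow> 's \<Rightarrow> 'x set" where
  "Xs F s = range (\<lambda>xh. F xh s)"

definition saeds :: "('x \<Rightarrow> 's \<Rightarrow> bool list) \<Rightarrow> ('x \<Rightarrow> 's \<Rightarrow> 'x) \<Rightarrow> bool" where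
  "saeds E F \<longleftrightarrow> aeds E F \<and> (\<forall>s t. s \<noteq> t \<longrightarrow> Xs F s \<inter> Xs F t = {}) \<and> (\<Union>s. Xs F s) = UNIV"

definition Fplus :: "('x \<Rightarrow> 's \<Rightarrow> 'x) \<Rightarrow> 's \<Rightarrow> 'x \<Rightarrow> 'x set" where
  "Fplus F s x = {xh. F xh s = x}"

definition chain_edges :: "('s \<Rightarrow> real) \<Rightarrow> ('x \<Rightarrow> 's \<Rightarrow> 'x) \<Rightarrow> ('x \<times> 'x) set" where
  "chain_edges p F = {(xh, F xh s) | xh s. p s > 0}"

definition irreducible_chain :: "('s \<Rightarrow> real) \<Rightarrow> ('x \<Rightarrow> 's \<Rightarrow> 'x) \<Rightarrow> bool" where
  "irreducible_chain p F \<longleftrightarrow> (\<forall>x y. (x, y) \<in> (chain_edges p F)\<^sup>*)"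

definition stationary :: "('s::finite \<Rightarrow> real) \<Rightarrow> ('x::finite \<Rightarrow> 's \<Rightarrow> 'x) \<Rightarrow> ('x \<Rightarrow> real) \<Rightarrow> bool" where
  "stationary p F Q \<longleftrightarrow> (\<forall>x. Q x \<ge> 0) \<and> (\<Sum>x\<in>UNIV. Q x) = 1 \<and>
     (\<forall>x. Q x = (\<Sum>xh\<in>UNIV. \<Sum>s\<in>UNIV. if F xh s = x then Q xh * p s else 0))"

definition avg_len :: "('s::finite \<Rightarrow> real) \<Rightarrow> ('x::finite \<Rightarrow> real) \<Rightarrow> ('x \<Rightarrow> 's \<Rightarrow> bool list) \<Rightarrow> real" where
  "avg_len p Q E = (\<Sum>xh\<in>UNIV. \<Sum>s\<in>UNIV. p s * Q xh * real (length (E xh s)))"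

definition Qt :: "('x::finite \<Rightarrow> 's \<Rightarrow> 'x) \<Rightarrow> ('x \<Rightarrow> real) \<Rightarrow> 's \<Rightarrow> 'x \<Rightarrow> real" where
  "Qt F Q s x = (\<Sum>xh\<in>Fplus F s x. Q xh)"

definition entropy :: "('s::finite \<Rightarrow> real) \<Rightarrow> real" where
  "entropy p = - (\<Sum>s\<in>UNIV. p s * log 2 (p s))"

definition kl_div :: "('s::finite \<Rightarrow> real) \<Rightarrow> ('s \<Rightarrow> real) \<Rightarrow> real" where
  "kl_div p q = (\<Sum>s\<in>UNIV. p s * log 2 (p s / q s))"

definition ceil_lg :: "nat \<Rightarrow> nat" where
  "ceil_lg n = nat \<lceil>log 2 (real n)\<rceil>"

definition mu_pi :: "nat \<Rightarrow> real" where
  "mu_pi n = real (ceil_lg n) + 1 - 2 ^ ceil_lg n / real n - log 2 (real n)"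

definition sigma_const :: real where
  "sigma_const = log 2 (log 2 (exp 1)) + 1 - log 2 (exp 1)"

definition smallest_set :: "'x set \<Rightarrow> ('x \<Rightarrow> real) \<Rightarrow> nat \<Rightarrow> 'x set \<Rightarrow> bool" where
  "smallest_set A f m C \<longleftrightarrow> C \<subseteq> A \<and> card C = m \<and> (\<forall>x\<in>C. \<forall>y\<in>A - C. f x \<le> f y)"

definition nu_bound :: "nat \<Rightarrow> real" where
  "nu_bound n = (2 * real n - 2 ^ ceil_lg n) / real n"

text \<open>\nu_{N_s, \tilde Q_s}, with the set \check X_s given as C\<close>
definition nu_val :: "nat \<Rightarrow> ('x \<Rightarrow> real) \<Rightarrow> 'x set \<Rightarrow> real" where
  "nu_val n f C = nu_bound n - (\<Sum>x\<in>C. f x)"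

end

theory Submission
  imports Defs "HOL-Analysis.Convex"
begin

(* Grouping the states by the sets F^+_x, the expected codeword length of symbol s is
   k - k_s + 1 minus the Qt_s-mass of the 2 N_s - 2^k_s states whose codewords are one bit
   shorter, and that mass is at least the mass of the lightest such set C_s.  Since
   k - lg N_s = - lg q(s), averaging over s with weights p(s) gives H(p) + D(p||q) plus
   the average of nu - mu_pi.  With t = 2^k_s / N_s in [1,2) one has mu_pi = 1 + lg t - t,
   which is nonnegative by concavity of lg on [1,2] and at most sigma because lg t - t is
   maximal at t = lg e.  Irreducibility makes the stationary Q, hence every Qt_s(x),
   positive, so C_s has positive mass; and the lightest m of N_s states carry at most the
   fraction m / N_s of the total mass. *)

lemma ceil_lg_bounds:
  assumes "0 < n"
  shows "n \<le> 2 ^ ceil_lg n" and "2 ^ ceil_lg n < 2 * n"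
proof -
  have ceil: "real (ceil_lg n) = of_int \<lceil>log 2 (real n)\<rceil>"
    unfolding ceil_lg_def using assms by simp
  have "real n = 2 powr log 2 (real n)" using assms by simp
  also have "\<dots> \<le> 2 powr real (ceil_lg n)" using ceil by (intro powr_mono) linarith+
  finally have "real n \<le> real (2 ^ ceil_lg n)" by (simp add: powr_realpow)
  then show "n \<le> 2 ^ ceil_lg n" by (simp only: of_nat_le_iff)
  have "2 powr real (ceil_lg n) < 2 powr (log 2 (real n) + 1)"
    using ceil by (intro powr_less_mono) linarith+
  also have "\<dots> = 2 * real n" using assms by (simp add: powr_add)
  finally have "real (2 ^ ceil_lg n) < real (2 * n)" by (simp add: powr_realpow)
  then show "2 ^ ceil_lg n < 2 * n" by (simp only: of_nat_less_iff)
qed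

lemma ceil_lg_le:
  assumes "0 < n" "n \<le> 2 ^ k"
  shows "ceil_lg n \<le> k"
proof -
  have "(2::nat) ^ ceil_lg n < 2 ^ Suc k"
    using ceil_lg_bounds(2)[OF assms(1)] assms(2) by simp
  then have "ceil_lg n < Suc k" by (rule power_less_imp_less_exp[rotated]) simp
  then show ?thesis by simp
qed

lemma log2_ge_sub_one:
  fixes t :: real
  assumes "1 \<le> t" "t \<le> 2"
  shows "t - 1 \<le> log 2 t"
proof -
  have "(1 - (t - 1)) * ln 1 + (t - 1) * ln 2
      \<le> ln ((1 - (t - 1)) *\<^sub>R 1 + (t - 1) *\<^sub>R 2)"
    by (rule concave_onD[OF ln_concave]) (use assms in auto)
  then have "(t - 1) * ln 2 \<le> ln t" by (simp add: algebra_simps)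
  then show ?thesis by (simp add: log_def field_simps)
qed

lemma log2_minus_self_le:
  fixes t :: real
  assumes "0 < t"
  shows "log 2 t - t \<le> log 2 (log 2 (exp 1)) - log 2 (exp 1)"
proof -
  define c where "c = log 2 (exp 1)"
  have c: "c = 1 / ln 2" "0 < c" unfolding c_def log_def by simp_all
  have "ln (t / c) \<le> t / c - 1" using assms c by (intro ln_le_minus_one) simp
  moreover have "ln (t / c) = ln t - ln c" using assms c(2) by (rule ln_divide_pos)
  ultimately have "ln t - ln c \<le> t * ln 2 - 1" using c by simp
  then have "(ln t - t * ln 2) / ln 2 \<le> (ln c - 1) / ln 2"
    by (intro divide_right_mono) auto
  then have "ln t / ln 2 - t \<le> ln c / ln 2 - c" using c(1) by (simp add: diff_divide_distrib)
  then show ?thesis by (simp add: log_def c_def)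
qed

lemma mu_pi_bounds:
  assumes "0 < n"
  shows "0 \<le> mu_pi n" and "mu_pi n \<le> sigma_const"
proof -
  define t where "t = 2 ^ ceil_lg n / real n"
  have "real n \<le> real (2 ^ ceil_lg n)" "real (2 ^ ceil_lg n) < real (2 * n)"
    using ceil_lg_bounds[OF assms] by (simp_all only: of_nat_le_iff of_nat_less_iff)
  then have t: "1 \<le> t" "t < 2" using assms unfolding t_def by (simp_all add: field_simps)
  have "log 2 t = real (ceil_lg n) - log 2 (real n)"
    unfolding t_def using assms by (simp add: log_divide_pos log_nat_power)
  then have mu: "mu_pi n = 1 + log 2 t - t" unfolding mu_pi_def t_def by simp
  show "0 \<le> mu_pi n" using log2_ge_sub_one[of t] t mu by simp
  show "mu_pi n \<le> sigma_const"
    using log2_minus_self_le[of t] t mu unfolding sigma_const_def by simp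
qed

lemma sum_le_sum_of_card_eq:
  fixes f :: "'a \<Rightarrow> 'b::ordered_comm_monoid_add"
  assumes "finite X" "finite Y" "card X = card Y" "\<forall>x\<in>X. \<forall>y\<in>Y. f x \<le> f y"
  shows "sum f X \<le> sum f Y"
proof -
  obtain g where g: "bij_betw g X Y" using assms(1-3) by (metis bij_betw_iff_card)
  then have "sum f X \<le> sum (f \<circ> g) X"
    using assms(4) by (intro sum_mono) (auto simp: bij_betw_def)
  also have "\<dots> = sum f Y" using g sum.reindex[of g X f] by (simp add: bij_betw_def)
  finally show ?thesis .
qed

lemma smallest_set_sum_le:
  assumes "smallest_set A f m C" "finite A" "B \<subseteq> A" "card B = m"
  shows "sum f C \<le> sum f B"
proof -
  have C: "C \<subseteq> A" "card C = m" "\<forall>x\<in>C. \<forall>y\<in>A - C. f x \<le> f y"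
    using assms(1) unfolding smallest_set_def by auto
  have fin: "finite C" "finite B" using assms(2,3) C(1) by (auto intro: finite_subset)
  have "card (C - B) = card (B - C)"
    using fin assms(4) C(2) by (metis card_Diff_subset_Int Int_commute finite_Int)
  then have "sum f (C - B) \<le> sum f (B - C)"
    using fin assms(3) C(3) by (intro sum_le_sum_of_card_eq) auto
  then show ?thesis
    using sum.Int_Diff[OF fin(1), of f B] sum.Int_Diff[OF fin(2), of f C]
    by (simp add: Int_commute)
qed

lemma smallest_set_mean_le:
  assumes "smallest_set A f m C" "finite A"
  shows "real (card A) * sum f C \<le> real m * sum f A"
proof -
  have C: "C \<subseteq> A" "card C = m" "\<forall>x\<in>C. \<forall>y\<in>A - C. f x \<le> f y"
    using assms(1) unfolding smallest_set_def by auto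
  have "(\<Sum>x\<in>C. \<Sum>y\<in>A - C. f x) \<le> (\<Sum>x\<in>C. \<Sum>y\<in>A - C. f y)"
    using C(3) by (intro sum_mono) auto
  then have "real (card (A - C)) * sum f C \<le> real m * sum f (A - C)"
    using C(2) by (simp add: sum_distrib_left sum_distrib_right mult.commute)
  moreover have "real (card A) = real m + real (card (A - C))"
    using assms(2) C(1,2) card_mono[OF assms(2) C(1)]
    by (simp add: card_Diff_subset finite_subset)
  moreover have "sum f A = sum f C + sum f (A - C)"
    using assms(2) C(1) by (metis add.commute sum.subset_diff)
  ultimately show ?thesis by (simp add: algebra_simps)
qed

lemma nu_bound_eq:
  assumes "0 < n"
  shows "nu_bound n = real (2 * n - 2 ^ ceil_lg n) / real n"
  using ceil_lg_bounds[OF assms] unfolding nu_bound_def by (simp add: of_nat_diff)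

lemma nu_val_bounds:
  assumes "0 < n" "card A = n" "smallest_set A f (2 * n - 2 ^ ceil_lg n) C"
    "sum f A = 1" "\<forall>x\<in>A. 0 < f x"
  shows "0 \<le> nu_val n f C" "nu_val n f C < nu_bound n" "nu_bound n \<le> 1"
proof -
  let ?m = "2 * n - 2 ^ ceil_lg n"
  have m: "0 < ?m" "?m \<le> n" using ceil_lg_bounds[OF assms(1)] by auto
  have fin: "finite A" using assms(1,2) card_ge_0_finite by blast
  have C: "C \<subseteq> A" "card C = ?m" using assms(3) unfolding smallest_set_def by auto
  have "real n * sum f C \<le> real ?m"
    using smallest_set_mean_le[OF assms(3) fin] assms(2,4) by simp
  then have "sum f C \<le> nu_bound n"
    using assms(1) by (simp add: nu_bound_eq pos_le_divide_eq mult.commute)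
  then show "0 \<le> nu_val n f C" unfolding nu_val_def by simp
  have "C \<noteq> {}" using C(2) m(1) by auto
  then have "0 < sum f C"
    using C(1) fin assms(5) by (intro sum_pos) (auto intro: finite_subset)
  then show "nu_val n f C < nu_bound n" unfolding nu_val_def by simp
  show "nu_bound n \<le> 1"
    using nu_bound_eq[OF assms(1)] m(2) assms(1) by (simp add: divide_le_eq_1)
qed

lemma sum_UNIV_eq_sum_Fplus:
  fixes F :: "'x::finite \<Rightarrow> 's \<Rightarrow> 'x" and g :: "'x \<Rightarrow> 'a::comm_monoid_add"
  shows "sum g UNIV = (\<Sum>x\<in>Xs F s. \<Sum>xh\<in>Fplus F s x. g xh)"
  using sum.group[of UNIV "Xs F s" "\<lambda>xh. F xh s" g] by (simp add: Xs_def Fplus_def)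

lemma sum_Qt: "sum (Qt F Q s) (Xs F s) = sum Q UNIV"
  unfolding Qt_def by (rule sum_UNIV_eq_sum_Fplus[symmetric])

lemma Qt_pos:
  assumes "\<forall>xh. 0 < Q xh" "x \<in> Xs F s"
  shows "0 < Qt F Q s x"
proof -
  obtain xh where "F xh s = x" using assms(2) unfolding Xs_def by auto
  then have "xh \<in> Fplus F s x" unfolding Fplus_def by simp
  then show ?thesis
    unfolding Qt_def using assms(1) by (intro sum_pos2) (auto intro: less_imp_le)
qed

lemma stationary_transition_le:
  assumes "stationary p F Q" "\<forall>s. 0 \<le> p s"
  shows "Q xh * p s \<le> Q (F xh s)"
proof -
  have Q_nonneg: "\<forall>x. 0 \<le> Q x"
    and Q_eq: "\<forall>x. Q x = (\<Sum>a\<in>UNIV. \<Sum>t\<in>UNIV. if F a t = x then Q a * p t else 0)"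
    using assms(1) unfolding stationary_def by auto
  let ?flow = "\<lambda>a t. if F a t = F xh s then Q a * p t else 0"
  have nonneg: "0 \<le> ?flow a t" for a t using Q_nonneg assms(2) by simp
  have "Q xh * p s \<le> (\<Sum>t\<in>UNIV. ?flow xh t)"
    using member_le_sum[of s UNIV "?flow xh"] nonneg by simp
  also have "\<dots> \<le> (\<Sum>a\<in>UNIV. \<Sum>t\<in>UNIV. ?flow a t)"
    using nonneg by (intro member_le_sum sum_nonneg) auto
  also have "\<dots> = Q (F xh s)" using Q_eq by simp
  finally show ?thesis .
qed

lemma stationary_irreducible_pos:
  assumes "stationary p F Q" "irreducible_chain p F" "\<forall>s. 0 \<le> p s"
  shows "0 < Q x"
proof -
  obtain x0 where x0: "0 < Q x0"
    using assms(1) unfolding stationary_def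
    by (metis less_eq_real_def sum.neutral zero_neq_one)
  have "(x0, x) \<in> (chain_edges p F)\<^sup>*" using assms(2) unfolding irreducible_chain_def by blast
  then show ?thesis
  proof (induction rule: rtrancl_induct)
    case base
    show ?case using x0 .
  next
    case (step y z)
    then obtain s where "z = F y s" "0 < p s" unfolding chain_edges_def by auto
    then show ?case using stationary_transition_le[OF assms(1,3), of y s] step.IH
      by (meson mult_pos_pos order_less_le_trans)
  qed
qed

lemma sum_weights_two_levels:
  fixes w g :: "'a \<Rightarrow> real"
  assumes "finite A" "sum w A = 1" "\<forall>x\<in>A. g x = (if x \<in> S then a + 1 else a)"
  shows "(\<Sum>x\<in>A. w x * g x) = a + 1 - sum w (A - S)"
proof -
  have "(\<Sum>x\<in>A. w x * g x) = (\<Sum>x\<in>A. a * w x + (if x \<in> S then w x else 0))"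
    using assms(3) by (intro sum.cong) (auto simp: algebra_simps)
  also have "\<dots> = a + sum w (A \<inter> S)"
    using assms(1,2) by (simp add: sum.distrib sum_distrib_left[symmetric] sum.If_cases)
  also have "sum w (A \<inter> S) = 1 - sum w (A - S)"
    using sum.Int_Diff[OF assms(1), of w S] assms(2) by simp
  finally show ?thesis by simp
qed

lemma expected_length_eq_sum_Qt:
  assumes "\<forall>x\<in>Xs F s. \<forall>xh\<in>Fplus F s x. real (length (E xh s)) = l x"
  shows "(\<Sum>xh\<in>UNIV. Q xh * real (length (E xh s))) = (\<Sum>x\<in>Xs F s. Qt F Q s x * l x)"
proof -
  have "(\<Sum>xh\<in>UNIV. Q xh * real (length (E xh s)))
      = (\<Sum>x\<in>Xs F s. \<Sum>xh\<in>Fplus F s x. Q xh * real (length (E xh s)))"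
    by (rule sum_UNIV_eq_sum_Fplus)
  also have "\<dots> = (\<Sum>x\<in>Xs F s. Qt F Q s x * l x)"
    unfolding Qt_def sum_distrib_right using assms by (intro sum.cong refl) simp
  finally show ?thesis .
qed

lemma expected_length_two_levels_le:
  fixes F :: "'x::finite \<Rightarrow> 's \<Rightarrow> 'x" and a :: nat and s :: 's
  defines "big \<equiv> {x \<in> Xs F s. card (Fplus F s x) = 2 ^ (a + 1)}"
  assumes Q_sum: "sum Q UNIV = 1"
    and sizes: "\<forall>x \<in> Xs F s.
                  card (Fplus F s x) = 2 ^ (a + 1) \<or> card (Fplus F s x) = 2 ^ a"
    and fixed_len: "\<forall>x \<in> Xs F s. \<forall>xh \<in> Fplus F s x.
                      real (length (E xh s)) = log 2 (real (card (Fplus F s x)))"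
    and C: "smallest_set (Xs F s) (Qt F Q s) (card (Xs F s) - card big) C"
  shows "(\<Sum>xh\<in>UNIV. Q xh * real (length (E xh s))) \<le> real a + 1 - sum (Qt F Q s) C"
proof -
  have "\<forall>x\<in>Xs F s.
      log 2 (real (card (Fplus F s x))) = (if x \<in> big then real a + 1 else real a)"
    using sizes unfolding big_def by (auto simp: log_mult log_nat_power)
  then have "(\<Sum>xh\<in>UNIV. Q xh * real (length (E xh s)))
      = real a + 1 - sum (Qt F Q s) (Xs F s - big)"
    using fixed_len Q_sum sum_Qt[of F Q s]
    by (simp add: expected_length_eq_sum_Qt sum_weights_two_levels)
  moreover have "sum (Qt F Q s) C \<le> sum (Qt F Q s) (Xs F s - big)"
    using C by (rule smallest_set_sum_le) (auto simp: big_def card_Diff_subset)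
  ultimately show ?thesis by simp
qed

lemma expected_length_le_nu_sub_mu:
  fixes F :: "'x::finite \<Rightarrow> 's \<Rightarrow> 'x" and n k :: nat and s :: 's
  assumes n: "0 < n" "n \<le> 2 ^ k" "card (Xs F s) = n"
    and big: "card {x \<in> Xs F s. card (Fplus F s x) = 2 ^ (k - ceil_lg n + 1)}
                = 2 ^ ceil_lg n - n"
    and sizes: "\<forall>x \<in> Xs F s. card (Fplus F s x) = 2 ^ (k - ceil_lg n + 1)
                  \<or> card (Fplus F s x) = 2 ^ (k - ceil_lg n)"
    and fixed_len: "\<forall>x \<in> Xs F s. \<forall>xh \<in> Fplus F s x.
                      real (length (E xh s)) = log 2 (real (card (Fplus F s x)))"
    and Q_sum: "sum Q UNIV = 1"
    and C: "smallest_set (Xs F s) (Qt F Q s) (2 * n - 2 ^ ceil_lg n) C"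
  shows "(\<Sum>xh\<in>UNIV. Q xh * real (length (E xh s)))
           \<le> real k - log 2 (real n) + (nu_val n (Qt F Q s) C - mu_pi n)"
proof -
  have "card (Xs F s) - card {x \<in> Xs F s. card (Fplus F s x) = 2 ^ (k - ceil_lg n + 1)}
      = 2 * n - 2 ^ ceil_lg n"
    using n(3) big ceil_lg_bounds[OF n(1)] by simp
  then have "(\<Sum>xh\<in>UNIV. Q xh * real (length (E xh s)))
      \<le> real (k - ceil_lg n) + 1 - sum (Qt F Q s) C"
    using expected_length_two_levels_le[where a = "k - ceil_lg n" and F = F and s = s
        and Q = Q and E = E, OF Q_sum sizes fixed_len] C
    by simp
  also have "\<dots> = real k - log 2 (real n) + (nu_val n (Qt F Q s) C - mu_pi n)"
    using ceil_lg_le[OF n(1,2)] n(1)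
    by (simp add: nu_val_def nu_bound_def mu_pi_def field_simps)
  finally show ?thesis .
qed

lemma avg_len_eq:
  "avg_len p Q E = (\<Sum>s\<in>UNIV. p s * (\<Sum>xh\<in>UNIV. Q xh * real (length (E xh s))))"
  unfolding avg_len_def by (subst sum.swap) (simp add: sum_distrib_left mult.assoc)

lemma entropy_add_kl_div:
  assumes "\<forall>s. 0 < p s" "\<forall>s. 0 < q s"
  shows "entropy p + kl_div p q = - (\<Sum>s\<in>UNIV. p s * log 2 (q s))"
proof -
  have "p s * log 2 (p s / q s) - p s * log 2 (p s) = - (p s * log 2 (q s))" for s
    using assms by (simp add: log_divide_pos algebra_simps)
  then show ?thesis
    unfolding entropy_def kl_div_def by (simp add: sum_subtractf[symmetric] sum_negf)
qed

theorem theorem6: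
  fixes p :: "'s::finite \<Rightarrow> real"
    and E :: "'x::finite \<Rightarrow> 's \<Rightarrow> bool list"
    and F :: "'x \<Rightarrow> 's \<Rightarrow> 'x"
    and Q :: "'x \<Rightarrow> real"
    and Ns :: "'s \<Rightarrow> nat"
    and k :: nat
    and C :: "'s \<Rightarrow> 'x set"
  assumes alph: "CARD('s) \<ge> 2"
    and p_pos: "\<forall>s. p s > 0"
    and p_sum: "(\<Sum>s\<in>UNIV. p s) = 1"
    and k_pos: "k > 0"
    and N_def: "CARD('x) = 2 ^ k"
    and Ns_pos: "\<forall>s. Ns s > 0"
    and Ns_sum: "(\<Sum>s\<in>UNIV. Ns s) = CARD('x)"
    and sA: "saeds E F"
    and card_Xs: "\<forall>s. card (Xs F s) = Ns s"
    and big: "\<forall>s. card {x \<in> Xs F s. card (Fplus F s x) = 2 ^ (k - ceil_lg (Ns s) + 1)}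
                   = 2 ^ ceil_lg (Ns s) - Ns s"
    and sizes: "\<forall>s. \<forall>x \<in> Xs F s. card (Fplus F s x) = 2 ^ (k - ceil_lg (Ns s) + 1)
                   \<or> card (Fplus F s x) = 2 ^ (k - ceil_lg (Ns s))"
    and fixed_len: "\<forall>s. \<forall>x \<in> Xs F s. \<forall>xh \<in> Fplus F s x.
                   real (length (E xh s)) = log 2 (real (card (Fplus F s x)))"
    and irr: "irreducible_chain p F"
    and stat: "stationary p F Q"
    and C_small: "\<forall>s. smallest_set (Xs F s) (Qt F Q s) (2 * Ns s - 2 ^ ceil_lg (Ns s)) (C s)"
  shows "avg_len p Q E
           \<le> entropy p + kl_div p (\<lambda>s. real (Ns s) / real CARD('x))
              + (\<Sum>s\<in>UNIV. p s * (nu_val (Ns s) (Qt F Q s) (C s) - mu_pi (Ns s)))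
       \<and> entropy p + kl_div p (\<lambda>s. real (Ns s) / real CARD('x))
              + (\<Sum>s\<in>UNIV. p s * (nu_val (Ns s) (Qt F Q s) (C s) - mu_pi (Ns s)))
           \<le> entropy p + kl_div p (\<lambda>s. real (Ns s) / real CARD('x))
              + (\<Sum>s\<in>UNIV. p s * nu_val (Ns s) (Qt F Q s) (C s))
       \<and> (\<forall>s. 0 \<le> mu_pi (Ns s) \<and> mu_pi (Ns s) \<le> sigma_const)
       \<and> (\<forall>s. 0 \<le> nu_val (Ns s) (Qt F Q s) (C s)
              \<and> nu_val (Ns s) (Qt F Q s) (C s) < nu_bound (Ns s)
              \<and> nu_bound (Ns s) \<le> 1)"
proof -
  have Q_pos: "\<forall>x. 0 < Q x"
    using stationary_irreducible_pos[OF stat irr] p_pos by (simp add: less_imp_le)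
  have Q_sum: "sum Q UNIV = 1" using stat unfolding stationary_def by blast
  have Ns_le: "Ns s \<le> 2 ^ k" for s using member_le_sum[of s UNIV Ns] Ns_sum N_def by simp
  have mu: "0 \<le> mu_pi (Ns s)" "mu_pi (Ns s) \<le> sigma_const" for s
    using mu_pi_bounds Ns_pos by auto
  have nu: "0 \<le> nu_val (Ns s) (Qt F Q s) (C s)"
    "nu_val (Ns s) (Qt F Q s) (C s) < nu_bound (Ns s)" "nu_bound (Ns s) \<le> 1" for s
    using nu_val_bounds[of "Ns s" "Xs F s" "Qt F Q s" "C s"] Ns_pos card_Xs C_small Q_sum
      sum_Qt[of F Q s] Qt_pos[OF Q_pos, of _ F s] by auto
  have HD: "entropy p + kl_div p (\<lambda>s. real (Ns s) / real CARD('x))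
      = (\<Sum>s\<in>UNIV. p s * (real k - log 2 (real (Ns s))))"
    using entropy_add_kl_div[of p "\<lambda>s. real (Ns s) / real CARD('x)"] p_pos Ns_pos N_def
    by (simp add: log_divide_pos log_nat_power sum_negf[symmetric] algebra_simps)
  have "avg_len p Q E \<le> (\<Sum>s\<in>UNIV. p s *
      (real k - log 2 (real (Ns s)) + (nu_val (Ns s) (Qt F Q s) (C s) - mu_pi (Ns s))))"
    unfolding avg_len_eq using p_pos Ns_pos Ns_le card_Xs big sizes fixed_len Q_sum C_small
    by (intro sum_mono mult_left_mono expected_length_le_nu_sub_mu) (auto simp: less_imp_le)
  also have "\<dots> = entropy p + kl_div p (\<lambda>s. real (Ns s) / real CARD('x))
      + (\<Sum>s\<in>UNIV. p s * (nu_val (Ns s) (Qt F Q s) (C s) - mu_pi (Ns s)))"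
    unfolding HD by (simp add: distrib_left sum.distrib)
  finally show ?thesis
    using mu nu p_pos by (auto intro!: sum_mono mult_left_mono simp: less_imp_le)
qed

end
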